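(* Let $U$ be a random $\beta$-orthogonal permutation-invariant $m\times m$ matrix, let $\Pi$ be a uniformly random $m\times m$ permutation matrix, and let $\Lambda_1,\Lambda_2$ be random real diagonal $m\times m$ matrices such that $\Lambda_1$, $\Lambda_2$ are independent of each other and of $U$ and of $\Pi$ (with finite moments). Then for $k=1,2,3$, $$\varphi\!\left[(\Lambda_1+U^{-1}\Lambda_2U)^k\right]=\varphi\!\left[(\Lambda_1+\Pi^{-1}\Lambda_2\Pi)^k\right]=\sum_{j=0}^{k}\binom{k}{j}\varphi[\Lambda_1^{j}]\,\varphi[\Lambda_2^{k-j}].$$ In particular the first three moments of $\Lambda_1+U^{-1}\Lambda_2U$ do not depend on the distribution of $U$ (they coincide for $U=Q_s$, $U=\Pi$ and $U$ Haar distributed).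
   Context: Fix integers $m\ge 2$ and $\beta\in\{1,2,4\}$. A $\beta$-orthogonal matrix is an $m\times m$ real orthogonal ($\beta=1$), complex unitary ($\beta=2$) or quaternionic unitary/symplectic ($\beta=4$) matrix; $U^{-1}=U^{*}$. A random $\beta$-orthogonal matrix $U$ is called permutation invariant if for all $m\times m$ permutation matrices $\Pi_1,\Pi_2$ the joint distribution of the entries of $\Pi_1U\Pi_2$ equals that of $U$. For a random $m\times m$ matrix $X$, $\varphi[X]:=\frac1m\mathbb{E}\,\mathrm{Tr}\,X$ (for $\beta=4$, $\mathrm{Tr}$ denotes the real part of the trace). *)

theory Defs
  imports "HOL-Probability.Probability"
begin

text \<open>Quaternions are represented as pairs (a,b) of complex numbers, standing for a + b j
  with j z = cnj z j for complex z. Real numbers are (r,0) with r real, complex numbers (z,0).\<close>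

type_synonym quat = "complex \<times> complex"

definition qmul :: "quat \<Rightarrow> quat \<Rightarrow> quat" where
  "qmul x y = (fst x * fst y - snd x * cnj (snd y), fst x * snd y + snd x * cnj (fst y))"

definition qcnj :: "quat \<Rightarrow> quat" where
  "qcnj x = (cnj (fst x), - snd x)"

definition qone :: quat where "qone = (1, 0)"

definition in_K :: "nat \<Rightarrow> quat \<Rightarrow> bool" where
  "in_K \<beta> q = (if \<beta> = 1 then snd q = 0 \<and> Im (fst q) = 0
               else if \<beta> = 2 then snd q = 0 else True)"

type_synonym 'n qmat = "quat ^ 'n ^ 'n"

definition qmat_mul :: "'n::finite qmat \<Rightarrow> 'n qmat \<Rightarrow> 'n qmat" where
  "qmat_mul A B = (\<chi> i j. \<Sum>k\<in>UNIV. qmul (A $ i $ k) (B $ k $ j))"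

definition qmat_adj :: "'n::finite qmat \<Rightarrow> 'n qmat" where
  "qmat_adj A = (\<chi> i j. qcnj (A $ j $ i))"

definition qmat_one :: "'n::finite qmat" where
  "qmat_one = (\<chi> i j. if i = j then qone else 0)"

fun qmat_pow :: "'n::finite qmat \<Rightarrow> nat \<Rightarrow> 'n qmat" where
  "qmat_pow A 0 = qmat_one"
| "qmat_pow A (Suc k) = qmat_mul A (qmat_pow A k)"

definition real_diag :: "real ^ 'n \<Rightarrow> 'n::finite qmat" where
  "real_diag d = (\<chi> i j. if i = j then (complex_of_real (d $ i), 0) else 0)"

definition perm_qmat :: "('n \<Rightarrow> 'n) \<Rightarrow> 'n::finite qmat" where
  "perm_qmat p = (\<chi> i j. if p i = j then qone else 0)"

definition qtrace_re :: "'n::finite qmat \<Rightarrow> real" where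
  "qtrace_re A = (\<Sum>i\<in>UNIV. Re (fst (A $ i $ i)))"

definition beta_orthogonal :: "nat \<Rightarrow> 'n::finite qmat \<Rightarrow> bool" where
  "beta_orthogonal \<beta> U \<longleftrightarrow> (\<forall>i j. in_K \<beta> (U $ i $ j))
     \<and> qmat_mul (qmat_adj U) U = qmat_one \<and> qmat_mul U (qmat_adj U) = qmat_one"

definition qphi :: "'a measure \<Rightarrow> ('a \<Rightarrow> 'n::finite qmat) \<Rightarrow> real" where
  "qphi M X = (\<integral>\<omega>. qtrace_re (X \<omega>) \<partial>M) / real CARD('n)"

end

theory Submission
  imports Defs
begin

text \<open>For real diagonal \<open>X = diag x\<close>, \<open>Y = diag y\<close> and unitary \<open>V\<close> one has
  \<open>tr (X^p (V* Y V)^q) = \<Sum>i l. x_i^p y_l^q |V_li|^2\<close>, and for \<open>k \<le> 3\<close> cyclicity of the trace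
  turns \<open>tr ((X + V* Y V)^k)\<close> into a binomial combination of such mixed traces. Taking
  expectations, independence factorises every summand, so the law of \<open>V\<close> enters only through
  the numbers \<open>E |V_li|^2\<close>. These all equal \<open>1/m\<close> as soon as the rows of \<open>V\<close> are unit vectors
  whose entries are exchangeable in law, which holds both for a permutation invariant \<open>U\<close> and
  for a uniform permutation matrix.\<close>

section \<open>Quaternion matrices\<close>

definition qnorm2 :: "quat \<Rightarrow> real" where
  "qnorm2 x = (cmod (fst x))\<^sup>2 + (cmod (snd x))\<^sup>2"

lemma qnorm2_nonneg: "qnorm2 x \<ge> 0"
  by (simp add: qnorm2_def)

lemma qmul_assoc: "qmul (qmul x y) z = qmul x (qmul y z)"
  by (simp add: qmul_def prod_eq_iff algebra_simps)

lemma qmul_add_left: "qmul (x + y) z = qmul x z + qmul y z"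
  by (simp add: qmul_def prod_eq_iff algebra_simps)

lemma qmul_add_right: "qmul x (y + z) = qmul x y + qmul x z"
  by (simp add: qmul_def prod_eq_iff algebra_simps)

lemma qmul_zero_left [simp]: "qmul 0 x = 0"
  and qmul_zero_right [simp]: "qmul x 0 = 0"
  and qmul_one_left [simp]: "qmul qone x = x"
  and qmul_one_right [simp]: "qmul x qone = x"
  by (simp_all add: qmul_def qone_def prod_eq_iff)

lemma qmul_sum_left: "qmul (\<Sum>k\<in>S. f k) z = (\<Sum>k\<in>S. qmul (f k) z)"
  by (induction S rule: infinite_finite_induct) (auto simp: qmul_add_left)

lemma qmul_sum_right: "qmul z (\<Sum>k\<in>S. f k) = (\<Sum>k\<in>S. qmul z (f k))"
  by (induction S rule: infinite_finite_induct) (auto simp: qmul_add_right)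

lemma qmul_of_real: "qmul (complex_of_real r, 0) (complex_of_real s, 0) = (complex_of_real (r * s), 0)"
  by (simp add: qmul_def)

lemma qcnj_zero [simp]: "qcnj 0 = 0"
  and qcnj_one [simp]: "qcnj qone = qone"
  by (simp_all add: qcnj_def qone_def prod_eq_iff)

lemma Re_fst_sum: "Re (fst (\<Sum>k\<in>S. f k)) = (\<Sum>k\<in>S. Re (fst (f k)))"
  by (induction S rule: infinite_finite_induct) auto

lemma Re_fst_qmul_commute: "Re (fst (qmul x y)) = Re (fst (qmul y x))"
  by (simp add: qmul_def)

lemma Re_fst_qmul_of_real: "Re (fst (qmul (complex_of_real r, 0) z)) = r * Re (fst z)"
  by (simp add: qmul_def)

lemma Re_fst_qcnj_qmul: "Re (fst (qmul (qmul (qcnj x) (complex_of_real d, 0)) x)) = d * qnorm2 x"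
  by (simp add: qmul_def qcnj_def qnorm2_def cmod_def power2_eq_square algebra_simps)

lemma Re_fst_qmul_qcnj: "Re (fst (qmul x (qcnj x))) = qnorm2 x"
  by (simp add: qmul_def qcnj_def qnorm2_def cmod_def power2_eq_square algebra_simps)

lemma qmat_mul_nth: "qmat_mul A B $ i $ j = (\<Sum>k\<in>UNIV. qmul (A $ i $ k) (B $ k $ j))"
  by (simp add: qmat_mul_def)

lemma qmat_mul_assoc: "qmat_mul (qmat_mul A B) C = qmat_mul A (qmat_mul B C)"
proof -
  have "(\<Sum>k\<in>UNIV. \<Sum>j\<in>UNIV. qmul (qmul (A $ i $ j) (B $ j $ k)) (C $ k $ l))
      = (\<Sum>j\<in>UNIV. \<Sum>k\<in>UNIV. qmul (qmul (A $ i $ j) (B $ j $ k)) (C $ k $ l))" for i l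
    by (rule sum.swap)
  then show ?thesis
    by (simp add: vec_eq_iff qmat_mul_nth qmul_sum_left qmul_sum_right qmul_assoc)
qed

lemma qmat_mul_add_left: "qmat_mul (A + B) C = qmat_mul A C + qmat_mul B C"
  by (simp add: vec_eq_iff qmat_mul_nth qmul_add_left sum.distrib)

lemma qmat_mul_add_right: "qmat_mul A (B + C) = qmat_mul A B + qmat_mul A C"
  by (simp add: vec_eq_iff qmat_mul_nth qmul_add_right sum.distrib)

lemma qmat_mul_one_right [simp]: "qmat_mul A qmat_one = A"
  and qmat_mul_one_left [simp]: "qmat_mul qmat_one A = A"
  by (simp_all add: vec_eq_iff qmat_mul_nth qmat_one_def if_distrib[of "qmul _"]
      if_distrib[of "\<lambda>x. qmul x _"] cong: if_cong)

lemma qtrace_re_add: "qtrace_re (A + B) = qtrace_re A + qtrace_re B"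
  by (simp add: qtrace_re_def sum.distrib)

lemma qtrace_re_qmat_mul_commute: "qtrace_re (qmat_mul A B) = qtrace_re (qmat_mul B A)"
  unfolding qtrace_re_def qmat_mul_nth Re_fst_sum
  by (subst sum.swap) (simp add: Re_fst_qmul_commute)

lemma real_diag_qmat_mul: "qmat_mul (real_diag c) (real_diag d) = real_diag (c * d)"
  by (simp add: vec_eq_iff qmat_mul_nth real_diag_def qmul_of_real if_distrib[of "qmul _"]
      if_distrib[of "\<lambda>x. qmul x _"] cong: if_cong)

lemma qmat_pow_real_diag: "qmat_pow (real_diag a) p = real_diag (\<chi> i. (a $ i) ^ p)"
proof (induction p)
  case 0
  then show ?case by (simp add: vec_eq_iff qmat_one_def real_diag_def qone_def)
next
  case (Suc p)
  have "a * (\<chi> i. (a $ i) ^ p) = (\<chi> i. (a $ i) ^ Suc p)" by (simp add: vec_eq_iff)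
  then show ?case by (simp add: Suc.IH real_diag_qmat_mul)
qed

lemma qtrace_re_real_diag: "qtrace_re (real_diag c) = (\<Sum>i\<in>UNIV. c $ i)"
  by (simp add: qtrace_re_def real_diag_def)

section \<open>Traces of a diagonal matrix plus a unitary conjugate\<close>

abbreviation qmat_conj :: "'n::finite qmat \<Rightarrow> 'n qmat \<Rightarrow> 'n qmat" where
  "qmat_conj V Z \<equiv> qmat_mul (qmat_mul (qmat_adj V) Z) V"

definition qunitary :: "'n::finite qmat \<Rightarrow> bool" where
  "qunitary V \<longleftrightarrow> qmat_mul (qmat_adj V) V = qmat_one \<and> qmat_mul V (qmat_adj V) = qmat_one"

lemma beta_orthogonal_qunitary: "beta_orthogonal \<beta> U \<Longrightarrow> qunitary U"
  by (simp add: beta_orthogonal_def qunitary_def)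

lemma qmat_conj_qmat_mul:
  assumes "qmat_mul V (qmat_adj V) = qmat_one"
  shows "qmat_mul (qmat_conj V P) (qmat_conj V Q) = qmat_conj V (qmat_mul P Q)"
proof -
  have "qmat_mul (qmat_conj V P) (qmat_conj V Q)
      = qmat_mul (qmat_mul (qmat_adj V) P) (qmat_mul (qmat_mul V (qmat_adj V)) (qmat_mul Q V))"
    by (simp add: qmat_mul_assoc)
  also have "\<dots> = qmat_conj V (qmat_mul P Q)"
    by (simp add: assms qmat_mul_assoc)
  finally show ?thesis .
qed

lemma qmat_pow_qmat_conj:
  assumes "qunitary V"
  shows "qmat_pow (qmat_conj V Z) q = qmat_conj V (qmat_pow Z q)"
  using assms by (induction q) (simp_all add: qunitary_def qmat_conj_qmat_mul)

lemma qtrace_re_real_diag_qmat_conj: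
  "qtrace_re (qmat_mul (real_diag c) (qmat_conj V (real_diag d)))
    = (\<Sum>i\<in>UNIV. \<Sum>l\<in>UNIV. c $ i * d $ l * qnorm2 (V $ l $ i))"
proof -
  have adj: "qmat_mul (qmat_adj V) (real_diag d) $ i $ k = qmul (qcnj (V $ k $ i)) (complex_of_real (d $ k), 0)"
    for i k
    by (simp add: qmat_mul_nth qmat_adj_def real_diag_def if_distrib[of "qmul _"] cong: if_cong)
  have diag: "qmat_mul (real_diag c) Z $ i $ i = qmul (complex_of_real (c $ i), 0) (Z $ i $ i)" for Z i
    by (simp add: qmat_mul_nth real_diag_def if_distrib[of "\<lambda>x. qmul x _"] cong: if_cong)
  show ?thesis
    unfolding qtrace_re_def diag Re_fst_qmul_of_real
      qmat_mul_nth[of "qmat_mul (qmat_adj V) (real_diag d)"] adj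
    by (simp add: Re_fst_sum Re_fst_qcnj_qmul sum_distrib_left mult.assoc)
qed

lemma qunitary_row_sum:
  assumes "qmat_mul V (qmat_adj V) = qmat_one"
  shows "(\<Sum>i\<in>UNIV. qnorm2 (V $ l $ i)) = 1"
proof -
  have "Re (fst (qmat_mul V (qmat_adj V) $ l $ l)) = 1"
    using assms by (simp add: qmat_one_def qone_def)
  then show ?thesis
    by (simp add: qmat_mul_nth qmat_adj_def Re_fst_sum Re_fst_qmul_qcnj)
qed

lemma qunitary_qnorm2_le_1:
  assumes "qmat_mul V (qmat_adj V) = qmat_one"
  shows "qnorm2 (V $ l $ i) \<le> 1"
proof -
  have "qnorm2 (V $ l $ i) \<le> (\<Sum>i'\<in>UNIV. qnorm2 (V $ l $ i'))"
    by (rule member_le_sum) (auto simp: qnorm2_nonneg)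
  with qunitary_row_sum[OF assms] show ?thesis by simp
qed

definition mixed_trace :: "real ^ 'n \<Rightarrow> real ^ 'n \<Rightarrow> 'n::finite qmat \<Rightarrow> nat \<Rightarrow> nat \<Rightarrow> real" where
  "mixed_trace a b V p q = (\<Sum>i\<in>UNIV. \<Sum>l\<in>UNIV. (a $ i) ^ p * (b $ l) ^ q * qnorm2 (V $ l $ i))"

lemma qtrace_re_pow_real_diag_pow_qmat_conj:
  assumes "qunitary V"
  shows "qtrace_re (qmat_mul (qmat_pow (real_diag a) p) (qmat_pow (qmat_conj V (real_diag b)) q))
    = mixed_trace a b V p q"
  by (simp add: qmat_pow_qmat_conj[OF assms] qmat_pow_real_diag qtrace_re_real_diag_qmat_conj
      mixed_trace_def)

text \<open>Up to length 3 every word in two letters is a cyclic rotation of some \<open>X^j Y^(k-j)\<close>;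
  the first exception is \<open>XYXY\<close>, which is why the theorem stops at \<open>k = 3\<close>.\<close>
lemma qtrace_re_pow_add_le_3:
  fixes X Y :: "'n::finite qmat"
  assumes "k \<le> 3"
  shows "qtrace_re (qmat_pow (X + Y) k)
    = (\<Sum>j = 0..k. real (k choose j) * qtrace_re (qmat_mul (qmat_pow X j) (qmat_pow Y (k - j))))"
proof -
  have cyc: "qtrace_re (qmat_mul A (qmat_mul B C)) = qtrace_re (qmat_mul C (qmat_mul A B))" for A B C :: "'n qmat"
    by (metis qmat_mul_assoc qtrace_re_qmat_mul_commute)
  have "k = 0 \<or> k = 1 \<or> k = 2 \<or> k = 3"
    using assms by auto
  then show ?thesis
    by (elim disjE)
       (simp_all add: eval_nat_numeral qmat_mul_add_left qmat_mul_add_right qtrace_re_add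
         qtrace_re_qmat_mul_commute[of Y X] cyc[of Y X X] cyc[of X Y X] cyc[of Y Y X] cyc[of Y X Y]
         qmat_mul_assoc)
qed

lemma qtrace_re_diag_plus_qmat_conj_pow:
  assumes "qunitary V" and "k \<le> 3"
  shows "qtrace_re (qmat_pow (real_diag a + qmat_conj V (real_diag b)) k)
    = (\<Sum>j = 0..k. real (k choose j) * mixed_trace a b V j (k - j))"
  by (simp add: qtrace_re_pow_add_le_3[OF assms(2)] qtrace_re_pow_real_diag_pow_qmat_conj[OF assms(1)])

lemma continuous_on_qmul [continuous_intros]:
  "continuous_on S f \<Longrightarrow> continuous_on S g \<Longrightarrow> continuous_on S (\<lambda>x. qmul (f x) (g x))"
  unfolding qmul_def by (intro continuous_intros)

lemma continuous_on_qmat_mul [continuous_intros]: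
  fixes f g :: "'b::topological_space \<Rightarrow> 'n::finite qmat"
  shows "continuous_on S f \<Longrightarrow> continuous_on S g \<Longrightarrow> continuous_on S (\<lambda>x. qmat_mul (f x) (g x))"
  unfolding qmat_mul_def by (intro continuous_intros)

lemma continuous_on_qmat_pow [continuous_intros]:
  fixes f :: "'b::topological_space \<Rightarrow> 'n::finite qmat"
  shows "continuous_on S f \<Longrightarrow> continuous_on S (\<lambda>x. qmat_pow (f x) k)"
  by (induction k) (simp_all add: continuous_intros qmat_one_def)

lemma continuous_on_qmat_adj [continuous_intros]:
  fixes f :: "'b::topological_space \<Rightarrow> 'n::finite qmat"
  shows "continuous_on S f \<Longrightarrow> continuous_on S (\<lambda>x. qmat_adj (f x))"
  unfolding qmat_adj_def qcnj_def by (intro continuous_intros)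

lemma continuous_on_real_diag [continuous_intros]:
  fixes f :: "'b::topological_space \<Rightarrow> real ^ 'n::finite"
  shows "continuous_on S f \<Longrightarrow> continuous_on S (\<lambda>x. real_diag (f x))"
  unfolding real_diag_def
proof (intro continuous_intros)
  fix i j :: 'n
  show "continuous_on S f \<Longrightarrow> continuous_on S (\<lambda>x. if i = j then (complex_of_real (f x $ i), 0) else 0)"
    by (cases "i = j") (simp_all add: continuous_intros)
qed

lemma continuous_on_qtrace_re [continuous_intros]:
  fixes f :: "'b::topological_space \<Rightarrow> 'n::finite qmat"
  shows "continuous_on S f \<Longrightarrow> continuous_on S (\<lambda>x. qtrace_re (f x))"
  unfolding qtrace_re_def by (intro continuous_intros)

lemma continuous_on_qnorm2 [continuous_intros]:
  "continuous_on S f \<Longrightarrow> continuous_on S (\<lambda>x. qnorm2 (f x))"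
  unfolding qnorm2_def by (intro continuous_intros)

lemma borel_measurable_qnorm2_entry [measurable]:
  "(\<lambda>X::'n::finite qmat. qnorm2 (X $ l $ i)) \<in> borel_measurable borel"
  by (intro borel_measurable_continuous_onI continuous_intros)

lemma borel_measurable_qtrace_re_pow_diag_plus_qmat_conj:
  fixes L1 L2 :: "'a \<Rightarrow> real ^ 'n::finite" and V :: "'a \<Rightarrow> 'n qmat"
  assumes "L1 \<in> borel_measurable M" "L2 \<in> borel_measurable M" "V \<in> borel_measurable M"
  shows "(\<lambda>\<omega>. qtrace_re (qmat_pow (real_diag (L1 \<omega>) + qmat_conj (V \<omega>) (real_diag (L2 \<omega>))) k))
    \<in> borel_measurable M"
proof -
  have trace: "(\<lambda>z::((real ^ 'n) \<times> (real ^ 'n)) \<times> 'n qmat. qtrace_re (qmat_pow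
      (real_diag (fst (fst z)) + qmat_conj (snd z) (real_diag (snd (fst z)))) k))
      \<in> borel_measurable borel"
    by (intro borel_measurable_continuous_onI continuous_intros)
  have "(\<lambda>\<omega>. ((L1 \<omega>, L2 \<omega>), V \<omega>)) \<in> borel_measurable M"
    using assms by measurable
  from measurable_compose[OF this trace] show ?thesis
    by simp
qed

section \<open>Independence and expected moments\<close>

text \<open>The library's \<open>indep_var\<close> needs both random variables to have the same type; this is
  independence of a pair of random variables of arbitrary types, in the rectangle form used by the
  hypotheses of the theorem.\<close>
definition indep_pair :: "'a measure \<Rightarrow> 'b measure \<Rightarrow> ('a \<Rightarrow> 'b) \<Rightarrow> 'c measure \<Rightarrow> ('a \<Rightarrow> 'c) \<Rightarrow> bool" where
  "indep_pair M S X T Y \<longleftrightarrow> X \<in> measurable M S \<and> Y \<in> measurable M T \<and>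
     (\<forall>A\<in>sets S. \<forall>B\<in>sets T. measure M {\<omega>\<in>space M. X \<omega> \<in> A \<and> Y \<omega> \<in> B}
        = measure M {\<omega>\<in>space M. X \<omega> \<in> A} * measure M {\<omega>\<in>space M. Y \<omega> \<in> B})"

lemma indep_pair_compose:
  assumes indep: "indep_pair M S X T Y"
    and f: "f \<in> measurable S S'" and g: "g \<in> measurable T T'"
  shows "indep_pair M S' (\<lambda>\<omega>. f (X \<omega>)) T' (\<lambda>\<omega>. g (Y \<omega>))"
  unfolding indep_pair_def
proof (intro conjI ballI)
  have X: "X \<in> measurable M S" and Y: "Y \<in> measurable M T"
    using indep by (auto simp: indep_pair_def)
  show "(\<lambda>\<omega>. f (X \<omega>)) \<in> measurable M S'" "(\<lambda>\<omega>. g (Y \<omega>)) \<in> measurable M T'"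
    using measurable_compose[OF X f] measurable_compose[OF Y g] by simp_all
  fix A B
  assume "A \<in> sets S'" "B \<in> sets T'"
  then have "f -` A \<inter> space S \<in> sets S" "g -` B \<inter> space T \<in> sets T"
    using f g by (auto intro: measurable_sets)
  then have rect: "measure M {\<omega>\<in>space M. X \<omega> \<in> f -` A \<inter> space S \<and> Y \<omega> \<in> g -` B \<inter> space T}
      = measure M {\<omega>\<in>space M. X \<omega> \<in> f -` A \<inter> space S}
        * measure M {\<omega>\<in>space M. Y \<omega> \<in> g -` B \<inter> space T}"
    using indep unfolding indep_pair_def by blast
  have "\<omega> \<in> space M \<Longrightarrow> X \<omega> \<in> space S \<and> Y \<omega> \<in> space T" for \<omega>
    using X Y by (auto intro: measurable_space)
  then have "{\<omega>\<in>space M. f (X \<omega>) \<in> A \<and> g (Y \<omega>) \<in> B}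
      = {\<omega>\<in>space M. X \<omega> \<in> f -` A \<inter> space S \<and> Y \<omega> \<in> g -` B \<inter> space T}"
    and "{\<omega>\<in>space M. f (X \<omega>) \<in> A} = {\<omega>\<in>space M. X \<omega> \<in> f -` A \<inter> space S}"
    and "{\<omega>\<in>space M. g (Y \<omega>) \<in> B} = {\<omega>\<in>space M. Y \<omega> \<in> g -` B \<inter> space T}"
    by auto
  with rect show "measure M {\<omega>\<in>space M. f (X \<omega>) \<in> A \<and> g (Y \<omega>) \<in> B}
      = measure M {\<omega>\<in>space M. f (X \<omega>) \<in> A} * measure M {\<omega>\<in>space M. g (Y \<omega>) \<in> B}"
    by (simp only:)
qed

lemma (in prob_space) indep_var_if_indep_pair:
  assumes "indep_pair M S X T Y"
  shows "indep_var S X T Y"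
proof -
  have X: "X \<in> measurable M S" and Y: "Y \<in> measurable M T"
    using assms by (auto simp: indep_pair_def)
  have "indep_set {X -` A \<inter> space M | A. A \<in> sets S} {Y -` B \<inter> space M | B. B \<in> sets T}"
  proof (rule indep_setI)
    fix a b
    assume "a \<in> {X -` A \<inter> space M | A. A \<in> sets S}" "b \<in> {Y -` B \<inter> space M | B. B \<in> sets T}"
    then obtain A B where "A \<in> sets S" "a = {\<omega>\<in>space M. X \<omega> \<in> A}"
      and "B \<in> sets T" "b = {\<omega>\<in>space M. Y \<omega> \<in> B}"
      by blast
    moreover have "a \<inter> b = {\<omega>\<in>space M. X \<omega> \<in> A \<and> Y \<omega> \<in> B}"
      using calculation by auto
    ultimately show "prob (a \<inter> b) = prob a * prob b"
      using assms by (simp add: indep_pair_def)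
  qed (use X Y in auto)
  then have "indep_sets (\<lambda>i. {case_bool X Y i -` A \<inter> space M | A. A \<in> sets (case_bool S T i)}) UNIV"
    unfolding indep_set_def
    by (rule back_subst[where P="\<lambda>F. indep_sets F UNIV"]) (simp add: fun_eq_iff split: bool.split)
  moreover have "\<forall>i\<in>UNIV. random_variable (case_bool S T i) (case_bool X Y i)"
    using X Y by (simp split: bool.split)
  ultimately show ?thesis
    unfolding indep_var_def indep_vars_def2 by blast
qed

lemma (in prob_space) integral_eq_inverse_card:
  fixes W :: "'a \<Rightarrow> 'n::finite \<Rightarrow> real"
  assumes sum_one: "AE \<omega> in M. (\<Sum>i\<in>UNIV. W \<omega> i) = 1"
    and int: "\<And>i. integrable M (\<lambda>\<omega>. W \<omega> i)"
    and exchangeable: "\<And>i j. (\<integral>\<omega>. W \<omega> i \<partial>M) = (\<integral>\<omega>. W \<omega> j \<partial>M)"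
  shows "(\<integral>\<omega>. W \<omega> i \<partial>M) = 1 / real CARD('n)"
proof -
  have "real CARD('n) * (\<integral>\<omega>. W \<omega> i \<partial>M) = (\<Sum>j\<in>(UNIV :: 'n set). \<integral>\<omega>. W \<omega> i \<partial>M)"
    by simp
  also have "\<dots> = (\<Sum>j\<in>UNIV. \<integral>\<omega>. W \<omega> j \<partial>M)"
    by (rule sum.cong) (simp_all add: exchangeable)
  also have "\<dots> = (\<integral>\<omega>. (\<Sum>j\<in>UNIV. W \<omega> j) \<partial>M)"
    using int by (simp add: integral_sum)
  also have "\<dots> = (\<integral>\<omega>. 1 \<partial>M)"
    using int sum_one by (intro integral_cong_AE) auto
  finally show ?thesis
    by (simp add: prob_space field_simps)
qed

lemma (in prob_space) integrable_qnorm2_entry: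
  assumes "V \<in> borel_measurable M" and "AE \<omega> in M. qunitary (V \<omega>)"
  shows "integrable M (\<lambda>\<omega>. qnorm2 (V \<omega> $ l $ i))"
  by (rule integrable_const_bound[where B=1])
     (use assms in \<open>auto simp: qunitary_def qnorm2_nonneg intro: qunitary_qnorm2_le_1\<close>)

lemma (in prob_space) integral_mixed_trace:
  fixes L1 L2 :: "'a \<Rightarrow> real ^ 'n::finite" and V :: "'a \<Rightarrow> 'n qmat"
  assumes indep12: "indep_pair M borel L1 borel L2"
    and indepV: "indep_pair M borel (\<lambda>\<omega>. (L1 \<omega>, L2 \<omega>)) borel V"
    and int1: "\<And>i. integrable M (\<lambda>\<omega>. (L1 \<omega> $ i) ^ p)"
    and int2: "\<And>l. integrable M (\<lambda>\<omega>. (L2 \<omega> $ l) ^ q)"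
    and intV: "\<And>i l. integrable M (\<lambda>\<omega>. qnorm2 (V \<omega> $ l $ i))"
    and EV: "\<And>i l. (\<integral>\<omega>. qnorm2 (V \<omega> $ l $ i) \<partial>M) = 1 / real CARD('n)"
  shows "integrable M (\<lambda>\<omega>. mixed_trace (L1 \<omega>) (L2 \<omega>) (V \<omega>) p q)"
    and "(\<integral>\<omega>. mixed_trace (L1 \<omega>) (L2 \<omega>) (V \<omega>) p q \<partial>M)
      = (\<Sum>i\<in>UNIV. \<integral>\<omega>. (L1 \<omega> $ i) ^ p \<partial>M) * (\<Sum>l\<in>UNIV. \<integral>\<omega>. (L2 \<omega> $ l) ^ q \<partial>M)
        / real CARD('n)"
proof -
  have summand: "integrable M (\<lambda>\<omega>. (L1 \<omega> $ i) ^ p * (L2 \<omega> $ l) ^ q * qnorm2 (V \<omega> $ l $ i))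
    \<and> (\<integral>\<omega>. (L1 \<omega> $ i) ^ p * (L2 \<omega> $ l) ^ q * qnorm2 (V \<omega> $ l $ i) \<partial>M)
      = (\<integral>\<omega>. (L1 \<omega> $ i) ^ p \<partial>M) * (\<integral>\<omega>. (L2 \<omega> $ l) ^ q \<partial>M) / real CARD('n)" for i l
  proof -
    have indep_ab: "indep_var borel (\<lambda>\<omega>. (L1 \<omega> $ i) ^ p) borel (\<lambda>\<omega>. (L2 \<omega> $ l) ^ q)"
      by (rule indep_var_if_indep_pair, rule indep_pair_compose[OF indep12]) measurable
    have "(\<lambda>z::(real ^ 'n) \<times> (real ^ 'n). (fst z $ i) ^ p * (snd z $ l) ^ q) \<in> borel_measurable borel"
      by (intro borel_measurable_continuous_onI continuous_intros)
    from indep_var_if_indep_pair[OF indep_pair_compose[OF indepV this borel_measurable_qnorm2_entry]]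
    have indep_abV: "indep_var borel (\<lambda>\<omega>. (L1 \<omega> $ i) ^ p * (L2 \<omega> $ l) ^ q)
        borel (\<lambda>\<omega>. qnorm2 (V \<omega> $ l $ i))"
      by simp
    note int_ab = indep_var_integrable[OF indep_ab int1 int2]
    show ?thesis
      using indep_var_integrable[OF indep_abV int_ab intV] indep_var_lebesgue_integral[OF indep_abV int_ab intV]
        indep_var_lebesgue_integral[OF indep_ab int1 int2] EV
      by simp
  qed
  then show "integrable M (\<lambda>\<omega>. mixed_trace (L1 \<omega>) (L2 \<omega>) (V \<omega>) p q)"
    by (simp add: mixed_trace_def)
  have "(\<integral>\<omega>. mixed_trace (L1 \<omega>) (L2 \<omega>) (V \<omega>) p q \<partial>M)
      = (\<Sum>i\<in>UNIV. \<Sum>l\<in>UNIV. (\<integral>\<omega>. (L1 \<omega> $ i) ^ p \<partial>M) * (\<integral>\<omega>. (L2 \<omega> $ l) ^ q \<partial>M) / real CARD('n))"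
    using summand by (simp add: mixed_trace_def integral_sum integrable_sum)
  then show "(\<integral>\<omega>. mixed_trace (L1 \<omega>) (L2 \<omega>) (V \<omega>) p q \<partial>M)
      = (\<Sum>i\<in>UNIV. \<integral>\<omega>. (L1 \<omega> $ i) ^ p \<partial>M) * (\<Sum>l\<in>UNIV. \<integral>\<omega>. (L2 \<omega> $ l) ^ q \<partial>M)
        / real CARD('n)"
    by (simp add: sum_product sum_divide_distrib)
qed

lemma (in prob_space) qphi_pow_real_diag:
  fixes L :: "'a \<Rightarrow> real ^ 'n::finite"
  assumes "\<And>i. integrable M (\<lambda>\<omega>. (L \<omega> $ i) ^ p)"
  shows "qphi M (\<lambda>\<omega>. qmat_pow (real_diag (L \<omega>)) p)
    = (\<Sum>i\<in>UNIV. \<integral>\<omega>. (L \<omega> $ i) ^ p \<partial>M) / real CARD('n)"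
  using assms by (simp add: qphi_def qmat_pow_real_diag qtrace_re_real_diag integral_sum)

lemma (in prob_space) qphi_pow_diag_plus_qmat_conj:
  fixes L1 L2 :: "'a \<Rightarrow> real ^ 'n::finite" and V :: "'a \<Rightarrow> 'n qmat"
  assumes indep12: "indep_pair M borel L1 borel L2"
    and indepV: "indep_pair M borel (\<lambda>\<omega>. (L1 \<omega>, L2 \<omega>)) borel V"
    and unitary: "AE \<omega> in M. qunitary (V \<omega>)"
    and EV: "\<And>i l. (\<integral>\<omega>. qnorm2 (V \<omega> $ l $ i) \<partial>M) = 1 / real CARD('n)"
    and moments1: "\<And>i p. integrable M (\<lambda>\<omega>. (L1 \<omega> $ i) ^ p)"
    and moments2: "\<And>i q. integrable M (\<lambda>\<omega>. (L2 \<omega> $ i) ^ q)"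
    and k: "k \<le> 3"
  shows "qphi M (\<lambda>\<omega>. qmat_pow (real_diag (L1 \<omega>) + qmat_conj (V \<omega>) (real_diag (L2 \<omega>))) k)
    = (\<Sum>j = 0..k. real (k choose j) * qphi M (\<lambda>\<omega>. qmat_pow (real_diag (L1 \<omega>)) j)
                                    * qphi M (\<lambda>\<omega>. qmat_pow (real_diag (L2 \<omega>)) (k - j)))"
proof -
  have L1: "L1 \<in> borel_measurable M" and L2: "L2 \<in> borel_measurable M"
    and V: "V \<in> borel_measurable M"
    using indep12 indepV by (auto simp: indep_pair_def)
  define S1 where "S1 j = (\<Sum>i\<in>UNIV. \<integral>\<omega>. (L1 \<omega> $ i) ^ j \<partial>M)" for j
  define S2 where "S2 j = (\<Sum>i\<in>UNIV. \<integral>\<omega>. (L2 \<omega> $ i) ^ j \<partial>M)" for j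
  note mixed = integral_mixed_trace[OF indep12 indepV moments1 moments2
      integrable_qnorm2_entry[OF V unitary] EV]
  have "(\<integral>\<omega>. qtrace_re (qmat_pow (real_diag (L1 \<omega>) + qmat_conj (V \<omega>) (real_diag (L2 \<omega>))) k) \<partial>M)
      = (\<integral>\<omega>. (\<Sum>j = 0..k. real (k choose j) * mixed_trace (L1 \<omega>) (L2 \<omega>) (V \<omega>) j (k - j)) \<partial>M)"
  proof (rule integral_cong_AE)
    show "(\<lambda>\<omega>. qtrace_re (qmat_pow (real_diag (L1 \<omega>)
        + qmat_conj (V \<omega>) (real_diag (L2 \<omega>))) k)) \<in> borel_measurable M"
      using L1 L2 V by (rule borel_measurable_qtrace_re_pow_diag_plus_qmat_conj)
    show "(\<lambda>\<omega>. \<Sum>j = 0..k. real (k choose j) * mixed_trace (L1 \<omega>) (L2 \<omega>) (V \<omega>) j (k - j))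
        \<in> borel_measurable M"
      using mixed(1) by (intro borel_measurable_sum borel_measurable_times borel_measurable_const) auto
    show "AE \<omega> in M. qtrace_re (qmat_pow (real_diag (L1 \<omega>) + qmat_conj (V \<omega>) (real_diag (L2 \<omega>))) k)
        = (\<Sum>j = 0..k. real (k choose j) * mixed_trace (L1 \<omega>) (L2 \<omega>) (V \<omega>) j (k - j))"
      using unitary by eventually_elim (rule qtrace_re_diag_plus_qmat_conj_pow[OF _ k])
  qed
  also have "\<dots> = (\<Sum>j = 0..k. real (k choose j) * (S1 j * S2 (k - j) / real CARD('n)))"
    using mixed by (simp add: integral_sum S1_def S2_def)
  finally have "qphi M (\<lambda>\<omega>. qmat_pow (real_diag (L1 \<omega>) + qmat_conj (V \<omega>) (real_diag (L2 \<omega>))) k)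
      = (\<Sum>j = 0..k. real (k choose j) * (S1 j * S2 (k - j) / real CARD('n))) / real CARD('n)"
    by (simp add: qphi_def)
  moreover have "qphi M (\<lambda>\<omega>. qmat_pow (real_diag (L1 \<omega>)) j) = S1 j / real CARD('n)"
    and "qphi M (\<lambda>\<omega>. qmat_pow (real_diag (L2 \<omega>)) j) = S2 j / real CARD('n)" for j
    by (simp_all add: S1_def S2_def qphi_pow_real_diag moments1 moments2)
  ultimately show ?thesis
    by (simp add: sum_divide_distrib mult.assoc)
qed

section \<open>Exchangeable unitary matrices\<close>

lemma perm_qmat_id: "perm_qmat id = qmat_one"
  by (simp add: perm_qmat_def qmat_one_def)

lemma qmat_mul_perm_qmat_transpose_nth:
  "qmat_mul X (perm_qmat (Transposition.transpose a b)) $ i $ j = X $ i $ Transposition.transpose a b j"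
proof -
  have "Transposition.transpose a b k = j \<longleftrightarrow> k = Transposition.transpose a b j" for k
    by (auto simp: transpose_def)
  then show ?thesis
    by (simp add: qmat_mul_nth perm_qmat_def if_distrib[of "qmul _"] cong: if_cong)
qed

lemma qnorm2_perm_qmat: "qnorm2 (perm_qmat p $ l $ i) = of_bool (p l = i)"
  by (simp add: perm_qmat_def qnorm2_def qone_def)

lemma qunitary_perm_qmat:
  assumes p: "p permutes UNIV"
  shows "qunitary (perm_qmat p)"
proof -
  have inv_eq: "p k = i \<longleftrightarrow> k = inv p i" for k i
    using permutes_inv_eq[OF p] by metis
  have inv_inj: "inv p a = inv p b \<longleftrightarrow> a = b" for a b
    by (metis permutes_inverses(1)[OF p])
  have inj: "p i = p j \<longleftrightarrow> i = j" for i j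
    using permutes_inj[OF p] by (auto dest: injD)
  have "qmat_mul (qmat_adj (perm_qmat p)) (perm_qmat p) = qmat_one"
    by (simp add: vec_eq_iff qmat_mul_nth qmat_adj_def perm_qmat_def qmat_one_def if_distrib[of "qmul _"]
        if_distrib[of "\<lambda>x. qmul x _"] inv_eq inv_inj cong: if_cong)
  moreover have "qmat_mul (perm_qmat p) (qmat_adj (perm_qmat p)) = qmat_one"
    by (simp add: vec_eq_iff qmat_mul_nth qmat_adj_def perm_qmat_def qmat_one_def if_distrib[of "qmul _"]
        if_distrib[of "\<lambda>x. qmul x _"] inj cong: if_cong)
  ultimately show ?thesis
    by (simp add: qunitary_def)
qed

lemma (in prob_space) integral_qnorm2_entry_perm_invariant:
  fixes U :: "'a \<Rightarrow> 'n::finite qmat"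
  assumes U: "U \<in> borel_measurable M" and unitary: "AE \<omega> in M. qunitary (U \<omega>)"
    and invariant: "\<And>p. p permutes UNIV \<Longrightarrow> distr M borel (\<lambda>\<omega>. qmat_mul (U \<omega>) (perm_qmat p)) = distr M borel U"
  shows "(\<integral>\<omega>. qnorm2 (U \<omega> $ l $ i) \<partial>M) = 1 / real CARD('n)"
proof (rule integral_eq_inverse_card)
  show "AE \<omega> in M. (\<Sum>i\<in>UNIV. qnorm2 (U \<omega> $ l $ i)) = 1"
    using unitary by eventually_elim (simp add: qunitary_def qunitary_row_sum)
  show "integrable M (\<lambda>\<omega>. qnorm2 (U \<omega> $ l $ i))" for i
    using U unitary by (auto intro: integrable_qnorm2_entry)
  show "(\<integral>\<omega>. qnorm2 (U \<omega> $ l $ i) \<partial>M) = (\<integral>\<omega>. qnorm2 (U \<omega> $ l $ j) \<partial>M)" for i j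
  proof -
    let ?UP = "\<lambda>\<omega>. qmat_mul (U \<omega>) (perm_qmat (Transposition.transpose i j))"
    have UP: "?UP \<in> borel_measurable M"
      by (rule measurable_compose[OF U]) (intro borel_measurable_continuous_onI continuous_intros)
    have "(\<integral>\<omega>. qnorm2 (U \<omega> $ l $ j) \<partial>M) = (\<integral>\<omega>. qnorm2 (?UP \<omega> $ l $ i) \<partial>M)"
      by (simp add: qmat_mul_perm_qmat_transpose_nth)
    also have "\<dots> = (\<integral>X. qnorm2 (X $ l $ i) \<partial>distr M borel ?UP)"
      by (rule integral_distr[symmetric, OF UP borel_measurable_qnorm2_entry])
    also have "\<dots> = (\<integral>X. qnorm2 (X $ l $ i) \<partial>distr M borel U)"
      by (simp add: invariant permutes_swap_id)
    also have "\<dots> = (\<integral>\<omega>. qnorm2 (U \<omega> $ l $ i) \<partial>M)"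
      by (rule integral_distr[OF U borel_measurable_qnorm2_entry])
    finally show ?thesis ..
  qed
qed

lemma card_permutes_value_eq:
  "card {p. p permutes (UNIV :: 'n::finite set) \<and> p l = i} = card {p. p permutes UNIV \<and> p l = j}"
proof (rule bij_betw_same_card[of "\<lambda>p. Transposition.transpose i j \<circ> p"])
  show "bij_betw (\<lambda>p. Transposition.transpose i j \<circ> p) {p. p permutes UNIV \<and> p l = i} {p. p permutes UNIV \<and> p l = j}"
    by (rule bij_betw_byWitness[where f'="\<lambda>p. Transposition.transpose i j \<circ> p"])
       (auto simp: fun_eq_iff intro!: permutes_compose permutes_swap_id)
qed

lemma (in prob_space) AE_qunitary_uniform_perm:
  fixes Pi :: "'a \<Rightarrow> 'n::finite \<Rightarrow> 'n"
  assumes Pi: "Pi \<in> measurable M (count_space UNIV)"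
    and uniform: "distr M (count_space UNIV) Pi = uniform_measure (count_space UNIV) {p. p permutes UNIV}"
  shows "AE \<omega> in M. qunitary (perm_qmat (Pi \<omega>))"
proof -
  have "AE p in distr M (count_space UNIV) Pi. p permutes UNIV"
    unfolding uniform by (rule AE_uniform_measureI) auto
  then have "AE \<omega> in M. Pi \<omega> permutes UNIV"
    by (rule AE_distrD[OF Pi])
  then show ?thesis
    by eventually_elim (rule qunitary_perm_qmat)
qed

lemma (in prob_space) integral_qnorm2_entry_uniform_perm:
  fixes Pi :: "'a \<Rightarrow> 'n::finite \<Rightarrow> 'n"
  assumes Pi: "Pi \<in> measurable M (count_space UNIV)"
    and uniform: "distr M (count_space UNIV) Pi = uniform_measure (count_space UNIV) {p. p permutes UNIV}"
  shows "(\<integral>\<omega>. qnorm2 (perm_qmat (Pi \<omega>) $ l $ i) \<partial>M) = 1 / real CARD('n)"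
proof (rule integral_eq_inverse_card)
  define S where "S = {p :: 'n \<Rightarrow> 'n. p permutes UNIV}"
  have "finite S"
    by (simp add: S_def)
  moreover have "id \<in> S"
    by (simp add: S_def permutes_id)
  ultimately have "finite S" "S \<noteq> {}"
    by auto
  have meas: "(\<lambda>\<omega>. qnorm2 (perm_qmat (Pi \<omega>) $ l $ i)) \<in> borel_measurable M" for i
    by (rule measurable_compose[OF Pi]) simp
  show "AE \<omega> in M. (\<Sum>i\<in>UNIV. qnorm2 (perm_qmat (Pi \<omega>) $ l $ i)) = 1"
    by (simp add: qnorm2_perm_qmat)
  show "integrable M (\<lambda>\<omega>. qnorm2 (perm_qmat (Pi \<omega>) $ l $ i))" for i
    by (rule integrable_const_bound[where B=1]) (use meas in \<open>auto simp: qnorm2_perm_qmat\<close>)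
  have E: "(\<integral>\<omega>. qnorm2 (perm_qmat (Pi \<omega>) $ l $ i) \<partial>M)
      = real (card {p. p permutes UNIV \<and> p l = i}) / real (card S)" for i
  proof -
    have "(\<integral>\<omega>. qnorm2 (perm_qmat (Pi \<omega>) $ l $ i) \<partial>M) = (\<integral>\<omega>. indicator {p. p l = i} (Pi \<omega>) \<partial>M)"
      by (simp add: qnorm2_perm_qmat indicator_def)
    also have "\<dots> = (\<integral>p. indicator {p. p l = i} p \<partial>distr M (count_space UNIV) Pi)"
      by (rule integral_distr[symmetric, OF Pi]) simp
    also have "\<dots> = measure (count_space UNIV) (S \<inter> {p. p l = i}) / measure (count_space UNIV) S"
      using \<open>finite S\<close> \<open>S \<noteq> {}\<close> by (simp add: uniform S_def)
    also have "\<dots> = real (card {p. p permutes UNIV \<and> p l = i}) / real (card S)"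
      using \<open>finite S\<close> by (simp add: S_def Collect_conj_eq)
    finally show ?thesis .
  qed
  show "(\<integral>\<omega>. qnorm2 (perm_qmat (Pi \<omega>) $ l $ i) \<partial>M) = (\<integral>\<omega>. qnorm2 (perm_qmat (Pi \<omega>) $ l $ j) \<partial>M)"
    for i j
    unfolding E card_permutes_value_eq[of l i j] ..
qed

theorem mainTheorem3:
  fixes M :: "'a measure" and \<beta> :: nat
    and U :: "'a \<Rightarrow> 'n::finite qmat"
    and Pi :: "'a \<Rightarrow> ('n \<Rightarrow> 'n)"
    and L1 L2 :: "'a \<Rightarrow> real ^ 'n"
  assumes "prob_space M"
    and "CARD('n) \<ge> 2"
    and "\<beta> \<in> {1, 2, 4}"
    and "U \<in> borel_measurable M"
    and "\<forall>\<omega>\<in>space M. beta_orthogonal \<beta> (U \<omega>)"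
    and "\<forall>p1 p2. p1 permutes UNIV \<longrightarrow> p2 permutes UNIV \<longrightarrow>
           distr M borel (\<lambda>\<omega>. qmat_mul (qmat_mul (perm_qmat p1) (U \<omega>)) (perm_qmat p2))
           = distr M borel U"
    and "Pi \<in> measurable M (count_space UNIV)"
    and "distr M (count_space UNIV) Pi = uniform_measure (count_space UNIV) {p. p permutes UNIV}"
    and "L1 \<in> borel_measurable M" and "L2 \<in> borel_measurable M"
    and "\<forall>A\<in>sets borel. \<forall>B\<in>sets borel.
           measure M {\<omega>\<in>space M. L1 \<omega> \<in> A \<and> L2 \<omega> \<in> B}
           = measure M {\<omega>\<in>space M. L1 \<omega> \<in> A} * measure M {\<omega>\<in>space M. L2 \<omega> \<in> B}"
    and "\<forall>A\<in>sets borel. \<forall>B\<in>sets borel.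
           measure M {\<omega>\<in>space M. (L1 \<omega>, L2 \<omega>) \<in> A \<and> U \<omega> \<in> B}
           = measure M {\<omega>\<in>space M. (L1 \<omega>, L2 \<omega>) \<in> A} * measure M {\<omega>\<in>space M. U \<omega> \<in> B}"
    and "\<forall>A\<in>sets borel. \<forall>B.
           measure M {\<omega>\<in>space M. (L1 \<omega>, L2 \<omega>) \<in> A \<and> Pi \<omega> \<in> B}
           = measure M {\<omega>\<in>space M. (L1 \<omega>, L2 \<omega>) \<in> A} * measure M {\<omega>\<in>space M. Pi \<omega> \<in> B}"
    and "\<forall>i k. integrable M (\<lambda>\<omega>. (L1 \<omega> $ i) ^ k)"
    and "\<forall>i k. integrable M (\<lambda>\<omega>. (L2 \<omega> $ i) ^ k)"
  shows "\<forall>k\<in>{1, 2, 3::nat}.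
     qphi M (\<lambda>\<omega>. qmat_pow (real_diag (L1 \<omega>)
        + qmat_mul (qmat_mul (qmat_adj (U \<omega>)) (real_diag (L2 \<omega>))) (U \<omega>)) k)
   = qphi M (\<lambda>\<omega>. qmat_pow (real_diag (L1 \<omega>)
        + qmat_mul (qmat_mul (qmat_adj (perm_qmat (Pi \<omega>))) (real_diag (L2 \<omega>))) (perm_qmat (Pi \<omega>))) k)
   \<and> qphi M (\<lambda>\<omega>. qmat_pow (real_diag (L1 \<omega>)
        + qmat_mul (qmat_mul (qmat_adj (perm_qmat (Pi \<omega>))) (real_diag (L2 \<omega>))) (perm_qmat (Pi \<omega>))) k)
   = (\<Sum>j = 0..k. real (k choose j) * qphi M (\<lambda>\<omega>. qmat_pow (real_diag (L1 \<omega>)) j)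
                                      * qphi M (\<lambda>\<omega>. qmat_pow (real_diag (L2 \<omega>)) (k - j)))"
proof -
  interpret prob_space M by fact
  note moments = assms(14,15)[rule_format]
  have L12: "(\<lambda>\<omega>. (L1 \<omega>, L2 \<omega>)) \<in> borel_measurable M"
    using assms(9,10) by measurable
  have indep12: "indep_pair M borel L1 borel L2"
    using assms(9-11) by (simp add: indep_pair_def)
  have indepU: "indep_pair M borel (\<lambda>\<omega>. (L1 \<omega>, L2 \<omega>)) borel U"
    using L12 assms(4,12) by (simp add: indep_pair_def)
  have "indep_pair M borel (\<lambda>\<omega>. (L1 \<omega>, L2 \<omega>)) (count_space UNIV) Pi"
    using L12 assms(7,13) by (simp add: indep_pair_def)
  from indep_pair_compose[OF this, of "\<lambda>z. z" borel perm_qmat borel]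
  have indepPi: "indep_pair M borel (\<lambda>\<omega>. (L1 \<omega>, L2 \<omega>)) borel (\<lambda>\<omega>. perm_qmat (Pi \<omega>))"
    by simp
  have U_unitary: "AE \<omega> in M. qunitary (U \<omega>)"
    using assms(5) by (intro AE_I2) (auto intro: beta_orthogonal_qunitary)
  have "distr M borel (\<lambda>\<omega>. qmat_mul (U \<omega>) (perm_qmat p)) = distr M borel U" if "p permutes UNIV" for p
    using assms(6)[rule_format, OF permutes_id that] by (simp add: perm_qmat_id)
  note EU = integral_qnorm2_entry_perm_invariant[OF assms(4) U_unitary this]
  note EPi = integral_qnorm2_entry_uniform_perm[OF assms(7,8)]
  have "k \<le> 3" if "k \<in> {1, 2, 3}" for k :: nat
    using that by auto
  with qphi_pow_diag_plus_qmat_conj[OF indep12 indepU U_unitary EU moments]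
    qphi_pow_diag_plus_qmat_conj[OF indep12 indepPi AE_qunitary_uniform_perm[OF assms(7,8)] EPi moments]
  show ?thesis
    by simp
qed

end
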